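(* Let $G=(V,E)$ be a graph with $V=[n]$ and no self-loops, and let $q_G(x)=\sum_{\{i,j\}\in E}a_{ij}x_ix_j+\sum_{i\in V}c_ix_i+c_0$ be positive on $[0,1]^n$. Let \[ \mathcal{G}_G=\Bigl\{\frac{(1,x,z)}{q_G(x)}\Bigm| x\in[0,1]^n,\ z_{ij}=x_ix_j\ \text{for }\{i,j\}\in E\Bigr\}. \] Then \[ \operatorname{conv}(\mathcal{G}_G)=\Bigl\{(\rho,y,w)\Bigm| (y,w)\in\rho\,\mathrm{QP}_G,\ \rho\ge0,\ \sum_{\{i,j\}\in E}a_{ij}w_{ij}+\sum_{i\in V}c_iy_i+c_0\rho=1\Bigr\}, \] and $\mathrm{QP}_G=\{(x,z)\mid (1,x,z)\in\sigma\operatorname{conv}(\mathcal{G}_G),\ \sigma\ge0\}$.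
   Context: The boolean quadric polytope $\mathrm{QP}_G$ is the convex hull of $\{(x,z)\in\mathbb{R}^{|V|+|E|}\mid x\in\{0,1\}^{|V|},\ z_{ij}=x_ix_j\ \text{for }\{i,j\}\in E\}$. For a set $K$, $\lambda K=\{\lambda k\mid k\in K\}$ for $\lambda>0$ and $0K$ is the recession cone of $K$. *)

theory Defs
  imports "HOL-Analysis.Analysis"
begin

text \<open>Vertices: the finite type 'n (standing for [n]).  The z-coordinates are indexed by all
  subsets of the vertices; coordinates not corresponding to an edge are fixed to 0.\<close>

definition simple_edges :: "'n set set \<Rightarrow> bool" where
  "simple_edges E \<longleftrightarrow> (\<forall>e\<in>E. \<exists>i j. i \<noteq> j \<and> e = {i, j})"

definition edge_lift :: "'n::finite set set \<Rightarrow> real^'n \<Rightarrow> real^('n set) \<Rightarrow> bool" where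
  "edge_lift E x z \<longleftrightarrow> (\<forall>i j. {i, j} \<in> E \<longrightarrow> z $ {i, j} = x $ i * x $ j) \<and> (\<forall>e. e \<notin> E \<longrightarrow> z $ e = 0)"

definition QP :: "'n::finite set set \<Rightarrow> ((real^'n) \<times> (real^('n set))) set" where
  "QP E = convex hull {(x, z). (\<forall>i. x $ i \<in> {0, 1}) \<and> edge_lift E x z}"

definition qG :: "'n::finite set set \<Rightarrow> ('n set \<Rightarrow> real) \<Rightarrow> ('n \<Rightarrow> real) \<Rightarrow> real \<Rightarrow> real^'n \<Rightarrow> real" where
  "qG E a c c0 x = (\<Sum>e\<in>E. a e * (\<Prod>i\<in>e. x $ i)) + (\<Sum>i\<in>UNIV. c i * x $ i) + c0"

definition GG :: "'n::finite set set \<Rightarrow> ('n set \<Rightarrow> real) \<Rightarrow> ('n \<Rightarrow> real) \<Rightarrow> real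
    \<Rightarrow> (real \<times> (real^'n) \<times> (real^('n set))) set" where
  "GG E a c c0 = {(1 / qG E a c c0 x) *\<^sub>R (1, x, z) | x z.
      (\<forall>i. 0 \<le> x $ i \<and> x $ i \<le> 1) \<and> edge_lift E x z}"

definition rec_cone :: "'a::real_vector set \<Rightarrow> 'a set" where
  "rec_cone K = {d. \<forall>k\<in>K. \<forall>t::real. t \<ge> 0 \<longrightarrow> k + t *\<^sub>R d \<in> K}"

definition scale_set :: "real \<Rightarrow> 'a::real_vector set \<Rightarrow> 'a set" where
  "scale_set r K = (if r = 0 then rec_cone K else (\<lambda>k. r *\<^sub>R k) ` K)"

end

theory Submission
  imports Defs
begin

text \<open>On a lifted point (x, z) the polynomial qG is the affine function
  L(x, z) = sum of a_e z_e + sum of c_i x_i + c0, so GG is the image of the lifted cube under the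
  projective map q to (1, q) / L(q). Where L is positive such a map sends convex hulls to convex
  hulls, and the lifted cube has the same convex hull as its binary points, because the lift is
  affine in every single coordinate; that hull is QP. So conv GG is the projective image of QP,
  which is the slice {L = 1} of the cone over QP. Since QP and its image are bounded, their
  recession cones are trivial, so the case rho = 0 contributes nothing, and dehomogenizing the
  image recovers QP.\<close>

section \<open>Projective images of convex sets\<close>

definition projective_lift :: "('a::real_vector \<Rightarrow> real) \<Rightarrow> real \<Rightarrow> 'a \<Rightarrow> real \<times> 'a" where
  "projective_lift l c0 q = (1 / (l q + c0)) *\<^sub>R (1, q)"

lemma rec_cone_bounded:
  fixes K :: "'a::real_normed_vector set"
  assumes "bounded K" and "K \<noteq> {}"
  shows "rec_cone K = {0}"
proof
  show "{0} \<subseteq> rec_cone K" by (simp add: rec_cone_def)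
  show "rec_cone K \<subseteq> {0}"
  proof
    fix d assume d: "d \<in> rec_cone K"
    obtain k where k: "k \<in> K" using assms(2) by blast
    obtain B where B: "\<And>x. x \<in> K \<Longrightarrow> norm x \<le> B" using assms(1) bounded_iff by blast
    show "d \<in> {0}"
    proof (rule ccontr)
      assume "d \<notin> {0}"
      then have nd: "norm d > 0" by simp
      define t where "t = (B + norm k + 1) / norm d"
      have "B + norm k + 1 > 0" using B[OF k] norm_ge_zero[of k] by linarith
      then have "t \<ge> 0" using nd by (simp add: t_def)
      then have "norm (k + t *\<^sub>R d) \<le> B" using d k B unfolding rec_cone_def by blast
      moreover have "norm (t *\<^sub>R d) = B + norm k + 1"
        using nd \<open>t \<ge> 0\<close> \<open>B + norm k + 1 > 0\<close> by (simp add: t_def)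
      ultimately show False using norm_triangle_ineq2[of "t *\<^sub>R d" "- k"] by (simp add: add.commute)
    qed
  qed
qed

lemma convex_projective_lift_image:
  assumes "linear l" and "convex C" and pos: "\<And>q. q \<in> C \<Longrightarrow> l q + c0 > 0"
  shows "convex (projective_lift l c0 ` C)"
proof (rule convexI)
  fix s t and u v :: real assume "s \<in> projective_lift l c0 ` C" "t \<in> projective_lift l c0 ` C"
    and uv: "0 \<le> u" "0 \<le> v" "u + v = 1"
  then obtain p q where p: "p \<in> C" "s = projective_lift l c0 p"
    and q: "q \<in> C" "t = projective_lift l c0 q"
    by blast
  define Lp Lq where "Lp = l p + c0" and "Lq = l q + c0"
  have Lpos: "Lp > 0" "Lq > 0" using pos p q by (auto simp: Lp_def Lq_def)
  define r where "r = u / Lp + v / Lq"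
  have r: "r > 0" using uv Lpos by (cases "u = 0") (auto simp: r_def add_pos_nonneg)
  define p' where "p' = (u / (r * Lp)) *\<^sub>R p + (v / (r * Lq)) *\<^sub>R q"
  have "u / (r * Lp) + v / (r * Lq) = (u / Lp + v / Lq) / r"
    using r Lpos by (simp add: field_simps)
  then have weights: "u / (r * Lp) + v / (r * Lq) = 1" using r by (simp add: r_def[symmetric])
  have p': "p' \<in> C"
    unfolding p'_def using assms(2) p q uv r Lpos weights by (intro convexD) auto
  have "l p' + c0 = 1 / r"
  proof -
    have "l p' + c0 = u / (r * Lp) * l p + v / (r * Lq) * l q + (u / (r * Lp) + v / (r * Lq)) * c0"
      using weights by (simp add: p'_def linear_add[OF assms(1)] linear_scale[OF assms(1)])
    also have "\<dots> = u / (r * Lp) * Lp + v / (r * Lq) * Lq"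
      by (simp add: Lp_def Lq_def distrib_left distrib_right)
    also have "\<dots> = (u + v) / r" using Lpos by (simp add: add_divide_distrib)
    also have "\<dots> = 1 / r" using uv by simp
    finally show ?thesis .
  qed
  moreover have "u *\<^sub>R s + v *\<^sub>R t = r *\<^sub>R (1, p')"
    using p q r Lpos by (simp add: projective_lift_def p'_def Lp_def Lq_def r_def scaleR_add_right)
  ultimately have "u *\<^sub>R s + v *\<^sub>R t = projective_lift l c0 p'"
    by (simp add: projective_lift_def)
  then show "u *\<^sub>R s + v *\<^sub>R t \<in> projective_lift l c0 ` C" using p' by blast
qed

lemma convex_hull_projective_lift_image:
  assumes "linear l" and pos: "\<And>q. q \<in> convex hull S \<Longrightarrow> l q + c0 > 0"
  shows "convex hull (projective_lift l c0 ` S) = projective_lift l c0 ` (convex hull S)"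
proof
  show "convex hull (projective_lift l c0 ` S) \<subseteq> projective_lift l c0 ` (convex hull S)"
    using convex_projective_lift_image[OF assms(1) convex_convex_hull pos]
    by (intro hull_minimal image_mono hull_subset)
  show "projective_lift l c0 ` (convex hull S) \<subseteq> convex hull (projective_lift l c0 ` S)"
  proof
    fix t assume "t \<in> projective_lift l c0 ` (convex hull S)"
    then obtain q where q: "q \<in> convex hull S" and t: "t = projective_lift l c0 q" by blast
    then obtain T u where T: "finite T" "T \<subseteq> S" and u: "\<forall>v\<in>T. 0 \<le> u v" "sum u T = 1"
      and uq: "(\<Sum>v\<in>T. u v *\<^sub>R v) = q"
      unfolding convex_hull_explicit by blast
    define L where "L v = l v + c0" for v
    have Lpos: "L v > 0" if "v \<in> T" for v
      using pos that T(2) hull_subset unfolding L_def by (metis subsetD)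
    have "L q = (\<Sum>v\<in>T. u v * l v) + (\<Sum>v\<in>T. u v) * c0"
      using u(2) by (simp add: L_def linear_sum[OF assms(1)] linear_scale[OF assms(1)] flip: uq)
    also have "\<dots> = (\<Sum>v\<in>T. u v * L v)"
      by (simp add: L_def distrib_left sum.distrib sum_distrib_right)
    finally have Lq: "L q = (\<Sum>v\<in>T. u v * L v)" .
    have "L q > 0" using pos q by (simp add: L_def)
    \<comment> \<open>The point (1, q) / L q is the combination of the (1, v) / L v with these weights.\<close>
    define \<mu> where "\<mu> v = u v * L v / L q" for v
    have "t = (\<Sum>v\<in>T. \<mu> v *\<^sub>R projective_lift l c0 v)"
    proof -
      have "(\<Sum>v\<in>T. \<mu> v *\<^sub>R projective_lift l c0 v) = (\<Sum>v\<in>T. (u v / L q) *\<^sub>R (1, v))"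
        using Lpos by (intro sum.cong)
          (simp_all add: \<mu>_def projective_lift_def L_def[symmetric] less_imp_neq[symmetric])
      also have "\<dots> = (1 / L q) *\<^sub>R (1, q)"
        using u(2) by (simp add: prod_eq_iff fst_sum snd_sum scaleR_sum_right
            sum_divide_distrib[symmetric] flip: uq)
      finally show ?thesis by (simp add: t projective_lift_def L_def)
    qed
    moreover have "(\<Sum>v\<in>T. \<mu> v *\<^sub>R projective_lift l c0 v) \<in> convex hull (projective_lift l c0 ` S)"
    proof (rule convex_sum[OF T(1) convex_convex_hull])
      show "sum \<mu> T = 1"
        using \<open>L q > 0\<close> by (simp add: \<mu>_def flip: sum_divide_distrib Lq)
      show "0 \<le> \<mu> v" if "v \<in> T" for v
        using that u(1) Lpos \<open>L q > 0\<close> by (simp add: \<mu>_def less_imp_le)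
      show "projective_lift l c0 v \<in> convex hull (projective_lift l c0 ` S)" if "v \<in> T" for v
        using that T(2) by (intro hull_inc imageI) blast
    qed
    ultimately show "t \<in> convex hull (projective_lift l c0 ` S)" by simp
  qed
qed

lemma projective_lift_image_eq_slice:
  fixes K :: "'a::real_normed_vector set"
  assumes "linear l" and "bounded K" and "K \<noteq> {}" and pos: "\<And>q. q \<in> K \<Longrightarrow> l q + c0 > 0"
  shows "projective_lift l c0 ` K = {(\<rho>, y). y \<in> scale_set \<rho> K \<and> \<rho> \<ge> 0 \<and> l y + c0 * \<rho> = 1}"
proof (intro set_eqI iffI)
  fix t assume "t \<in> projective_lift l c0 ` K"
  then obtain q where q: "q \<in> K" and t: "t = (1 / (l q + c0), (1 / (l q + c0)) *\<^sub>R q)"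
    by (auto simp: projective_lift_def)
  have "l ((1 / (l q + c0)) *\<^sub>R q) + c0 * (1 / (l q + c0)) = 1"
    using pos[OF q] by (simp add: linear_scale[OF assms(1)] add_divide_distrib[symmetric])
  then show "t \<in> {(\<rho>, y). y \<in> scale_set \<rho> K \<and> \<rho> \<ge> 0 \<and> l y + c0 * \<rho> = 1}"
    using pos[OF q] q by (auto simp: t scale_set_def less_imp_le)
next
  fix t assume "t \<in> {(\<rho>, y). y \<in> scale_set \<rho> K \<and> \<rho> \<ge> 0 \<and> l y + c0 * \<rho> = 1}"
  then obtain \<rho> y where t: "t = (\<rho>, y)" and y: "y \<in> scale_set \<rho> K"
    and slice: "l y + c0 * \<rho> = 1"
    by auto
  show "t \<in> projective_lift l c0 ` K"
  proof (cases "\<rho> = 0")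
    case True
    then have "y = 0" using y rec_cone_bounded[OF assms(2,3)] by (simp add: scale_set_def)
    then show ?thesis using slice True linear_0[OF assms(1)] by simp
  next
    case False
    then obtain q where q: "q \<in> K" and yq: "y = \<rho> *\<^sub>R q" using y by (auto simp: scale_set_def)
    have "\<rho> * (l q + c0) = 1" using slice by (simp add: yq linear_scale[OF assms(1)] algebra_simps)
    then have "\<rho> = 1 / (l q + c0)" using pos[OF q] by (simp add: field_simps)
    then have "t = projective_lift l c0 q" by (simp add: t yq projective_lift_def)
    then show ?thesis using q by blast
  qed
qed

lemma dehomogenize_projective_lift_image:
  fixes K :: "'a::real_normed_vector set"
  assumes "bounded (projective_lift l c0 ` K)" and "K \<noteq> {}" and pos: "\<And>q. q \<in> K \<Longrightarrow> l q + c0 > 0"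
  shows "K = {q. \<exists>\<sigma>\<ge>0. (1, q) \<in> scale_set \<sigma> (projective_lift l c0 ` K)}"
proof (intro set_eqI iffI)
  fix q assume q: "q \<in> K"
  then have "(1, q) = (l q + c0) *\<^sub>R projective_lift l c0 q"
    using pos[OF q] by (simp add: projective_lift_def)
  then have "(1, q) \<in> scale_set (l q + c0) (projective_lift l c0 ` K)"
    using pos[OF q] q by (auto simp: scale_set_def)
  then show "q \<in> {q. \<exists>\<sigma>\<ge>0. (1, q) \<in> scale_set \<sigma> (projective_lift l c0 ` K)}"
    using pos[OF q] by (auto intro!: exI[of _ "l q + c0"])
next
  fix q assume "q \<in> {q. \<exists>\<sigma>\<ge>0. (1, q) \<in> scale_set \<sigma> (projective_lift l c0 ` K)}"
  then obtain \<sigma> where q: "(1, q) \<in> scale_set \<sigma> (projective_lift l c0 ` K)" by blast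
  have "\<sigma> \<noteq> 0"
  proof
    assume "\<sigma> = 0"
    then show False using q rec_cone_bounded[OF assms(1)] assms(2) by (simp add: scale_set_def zero_prod_def)
  qed
  then obtain k where k: "k \<in> K" and "(1, q) = \<sigma> *\<^sub>R projective_lift l c0 k"
    using q by (auto simp: scale_set_def)
  then have "q = k" by (simp add: projective_lift_def)
  then show "q \<in> K" using k by simp
qed

lemma compact_projective_lift_image:
  fixes K :: "'a::euclidean_space set"
  assumes "linear l" and "compact K" and pos: "\<And>q. q \<in> K \<Longrightarrow> l q + c0 > 0"
  shows "compact (projective_lift l c0 ` K)"
proof -
  have "continuous_on K l"
    using assms(1) by (simp add: linear_continuous_on linear_conv_bounded_linear)
  then have "continuous_on K (projective_lift l c0)"
    unfolding projective_lift_def using pos by (intro continuous_intros) fastforce+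
  then show ?thesis using assms(2) by (rule compact_continuous_image)
qed

section \<open>The boolean quadric polytope\<close>

definition edge_lift_vec :: "'n::finite set set \<Rightarrow> real^'n \<Rightarrow> real^('n set)" where
  "edge_lift_vec E x = (\<chi> e. if e \<in> E then \<Prod>i\<in>e. x $ i else 0)"

definition qG_linear :: "'n::finite set set \<Rightarrow> ('n set \<Rightarrow> real) \<Rightarrow> ('n \<Rightarrow> real)
    \<Rightarrow> (real^'n) \<times> (real^('n set)) \<Rightarrow> real" where
  "qG_linear E a c p = (\<Sum>e\<in>E. a e * snd p $ e) + (\<Sum>i\<in>UNIV. c i * fst p $ i)"

lemma linear_qG_linear: "linear (qG_linear E a c)"
  by (rule linearI) (simp_all add: qG_linear_def sum.distrib distrib_left sum_distrib_left algebra_simps)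

lemma qG_linear_edge_lift_vec: "qG_linear E a c (x, edge_lift_vec E x) + c0 = qG E a c c0 x"
  unfolding qG_linear_def qG_def edge_lift_vec_def by (simp cong: sum.cong)

lemma edge_lift_iff:
  assumes "simple_edges E"
  shows "edge_lift E x z \<longleftrightarrow> z = edge_lift_vec E x"
proof
  assume lift: "edge_lift E x z"
  show "z = edge_lift_vec E x"
  proof (rule vec_eq_iff[THEN iffD2, rule_format])
    fix e
    show "z $ e = edge_lift_vec E x $ e"
    proof (cases "e \<in> E")
      case True
      then obtain i j where "i \<noteq> j" "e = {i, j}"
        using assms unfolding simple_edges_def by blast
      then show ?thesis using lift True unfolding edge_lift_def edge_lift_vec_def by simp
    next
      case False
      then show ?thesis using lift unfolding edge_lift_def edge_lift_vec_def by simp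
    qed
  qed
next
  assume "z = edge_lift_vec E x"
  moreover have "i \<noteq> j" if "{i, j} \<in> E" for i j
    using assms that unfolding simple_edges_def by (metis doubleton_eq_iff insert_absorb2)
  ultimately show "edge_lift E x z"
    unfolding edge_lift_def edge_lift_vec_def by auto
qed

definition vec_upd :: "real^'n \<Rightarrow> 'n \<Rightarrow> real \<Rightarrow> real^'n" where
  "vec_upd x k t = (\<chi> l. if l = k then t else x $ l)"

lemma vec_upd_same: "vec_upd x k (x $ k) = x"
  by (simp add: vec_eq_iff vec_upd_def)

lemma prod_vec_upd:
  fixes e :: "'n::finite set"
  shows "(\<Prod>i\<in>e. vec_upd x k t $ i) =
    t * (\<Prod>i\<in>e. vec_upd x k 1 $ i) + (1 - t) * (\<Prod>i\<in>e. vec_upd x k 0 $ i)"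
proof (cases "k \<in> e")
  case True
  have "(\<Prod>i\<in>e. vec_upd x k s $ i) = s * (\<Prod>i\<in>e - {k}. x $ i)" for s
  proof -
    have "(\<Prod>i\<in>e. vec_upd x k s $ i) = vec_upd x k s $ k * (\<Prod>i\<in>e - {k}. vec_upd x k s $ i)"
      by (rule prod.remove[OF finite True])
    also have "(\<Prod>i\<in>e - {k}. vec_upd x k s $ i) = (\<Prod>i\<in>e - {k}. x $ i)"
      by (rule prod.cong) (auto simp: vec_upd_def)
    finally show ?thesis by (simp add: vec_upd_def)
  qed
  then show ?thesis by (simp add: algebra_simps)
next
  case False
  then have "(\<Prod>i\<in>e. vec_upd x k s $ i) = (\<Prod>i\<in>e. x $ i)" for s
    by (auto simp: vec_upd_def intro!: prod.cong)
  then show ?thesis by (simp add: algebra_simps)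
qed

lemma edge_lift_vec_upd:
  "(vec_upd x k t, edge_lift_vec E (vec_upd x k t)) =
     t *\<^sub>R (vec_upd x k 1, edge_lift_vec E (vec_upd x k 1)) +
     (1 - t) *\<^sub>R (vec_upd x k 0, edge_lift_vec E (vec_upd x k 0))"
proof -
  have "vec_upd x k t = t *\<^sub>R vec_upd x k 1 + (1 - t) *\<^sub>R vec_upd x k 0"
    by (simp add: vec_eq_iff vec_upd_def algebra_simps)
  moreover have "edge_lift_vec E (vec_upd x k t) =
      t *\<^sub>R edge_lift_vec E (vec_upd x k 1) + (1 - t) *\<^sub>R edge_lift_vec E (vec_upd x k 0)"
    unfolding vec_eq_iff edge_lift_vec_def using prod_vec_upd[of x k t] by auto
  ultimately show ?thesis by simp
qed

lemma edge_lift_vec_in_QP: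
  fixes E :: "'n::finite set set"
  assumes "simple_edges E" and box: "\<forall>i. 0 \<le> x $ i \<and> x $ i \<le> 1"
  shows "(x, edge_lift_vec E x) \<in> QP E"
proof -
  \<comment> \<open>Induction on the set F of coordinates that may be fractional: a fractional coordinate
    is rounded to 0 and to 1, and the lift is the corresponding convex combination.\<close>
  have "\<forall>x. (\<forall>i. 0 \<le> x $ i \<and> x $ i \<le> 1) \<longrightarrow> (\<forall>i. i \<notin> F \<longrightarrow> x $ i \<in> {0, 1})
          \<longrightarrow> (x, edge_lift_vec E x) \<in> QP E" for F :: "'n set"
    using finite[of F]
  proof (induction F rule: finite_induct)
    case empty
    show ?case
      using edge_lift_iff[OF assms(1)] unfolding QP_def by (blast intro: hull_inc)
  next
    case (insert k F)
    show ?case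
    proof (intro allI impI)
      fix x :: "real^'n"
      assume box: "\<forall>i. 0 \<le> x $ i \<and> x $ i \<le> 1" and fixed: "\<forall>i. i \<notin> insert k F \<longrightarrow> x $ i \<in> {0, 1}"
      have "(vec_upd x k s, edge_lift_vec E (vec_upd x k s)) \<in> QP E" if "s \<in> {0, 1}" for s
      proof -
        have "\<forall>i. 0 \<le> vec_upd x k s $ i \<and> vec_upd x k s $ i \<le> 1"
          using box that by (auto simp: vec_upd_def)
        moreover have "\<forall>i. i \<notin> F \<longrightarrow> vec_upd x k s $ i \<in> {0, 1}"
          using fixed that by (auto simp: vec_upd_def)
        ultimately show ?thesis using insert.IH by blast
      qed
      then have "x $ k *\<^sub>R (vec_upd x k 1, edge_lift_vec E (vec_upd x k 1)) +
          (1 - x $ k) *\<^sub>R (vec_upd x k 0, edge_lift_vec E (vec_upd x k 0)) \<in> QP E"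
        using box unfolding QP_def by (intro convexD[OF convex_convex_hull]) auto
      then show "(x, edge_lift_vec E x) \<in> QP E"
        by (simp only: edge_lift_vec_upd[symmetric] vec_upd_same)
    qed
  qed
  then show ?thesis using box by blast
qed

lemma finite_binary_vectors: "finite {x::real^'n::finite. \<forall>i. x $ i \<in> {0, 1}}"
proof (rule finite_subset)
  show "{x::real^'n. \<forall>i. x $ i \<in> {0, 1}} \<subseteq> range (\<lambda>S. \<chi> i. if i \<in> S then 1 else 0)"
  proof
    fix x :: "real^'n" assume "x \<in> {x. \<forall>i. x $ i \<in> {0, 1}}"
    then have "x = (\<chi> i. if i \<in> {i. x $ i = 1} then 1 else 0)" by (auto simp: vec_eq_iff)
    then show "x \<in> range (\<lambda>S. \<chi> i. if i \<in> S then 1 else 0)" by blast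
  qed
qed simp

definition lifted_cube :: "'n::finite set set \<Rightarrow> ((real^'n) \<times> (real^('n set))) set" where
  "lifted_cube E = (\<lambda>x. (x, edge_lift_vec E x)) ` {x. \<forall>i. 0 \<le> x $ i \<and> x $ i \<le> 1}"

lemma lifted_cube_subset_QP:
  assumes "simple_edges E"
  shows "lifted_cube E \<subseteq> QP E"
  using edge_lift_vec_in_QP[OF assms] by (auto simp: lifted_cube_def)

lemma QP_eq_lifted_binary_vectors:
  assumes "simple_edges E"
  shows "QP E = convex hull ((\<lambda>x. (x, edge_lift_vec E x)) ` {x. \<forall>i. x $ i \<in> {0, 1}})"
  unfolding QP_def edge_lift_iff[OF assms] by (rule arg_cong[where f = "\<lambda>S. convex hull S"]) auto

lemma compact_QP:
  assumes "simple_edges E"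
  shows "compact (QP E)"
  unfolding QP_eq_lifted_binary_vectors[OF assms] using finite_binary_vectors
  by (intro finite_imp_compact_convex_hull finite_imageI)

lemma QP_eq_convex_hull_lifted_cube:
  assumes "simple_edges E"
  shows "QP E = convex hull (lifted_cube E)"
proof
  have "{x::real^'n. \<forall>i. x $ i \<in> {0, 1}} \<subseteq> {x. \<forall>i. 0 \<le> x $ i \<and> x $ i \<le> 1}"
  proof (intro subsetI CollectI allI)
    fix x :: "real^'n" and i
    assume "x \<in> {x. \<forall>i. x $ i \<in> {0, 1}}"
    then have "x $ i \<in> {0, 1}" by blast
    then show "0 \<le> x $ i \<and> x $ i \<le> 1" by auto
  qed
  then show "QP E \<subseteq> convex hull (lifted_cube E)"
    unfolding QP_eq_lifted_binary_vectors[OF assms] lifted_cube_def by (intro hull_mono image_mono)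
  show "convex hull (lifted_cube E) \<subseteq> QP E"
    using lifted_cube_subset_QP[OF assms] unfolding QP_def by (intro hull_minimal convex_convex_hull)
qed

lemma qG_linear_pos_on_QP:
  assumes "simple_edges E"
    and pos: "\<And>x. (\<forall>i. 0 \<le> x $ i \<and> x $ i \<le> 1) \<Longrightarrow> qG E a c c0 x > 0"
    and "q \<in> QP E"
  shows "qG_linear E a c q + c0 > 0"
proof -
  have "QP E \<subseteq> qG_linear E a c -` {-c0<..}"
    unfolding QP_eq_convex_hull_lifted_cube[OF assms(1)]
  proof (rule hull_minimal)
    show "lifted_cube E \<subseteq> qG_linear E a c -` {-c0<..}"
      using pos qG_linear_edge_lift_vec[of E a c _ c0, THEN eq_diff_eq[THEN iffD2]]
      by (auto simp: lifted_cube_def)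
    show "convex (qG_linear E a c -` {-c0<..})"
      by (rule convex_linear_vimage[OF linear_qG_linear]) simp
  qed
  then show ?thesis using assms(3) by auto
qed

lemma GG_eq_projective_lift_image:
  assumes "simple_edges E"
  shows "GG E a c c0 = projective_lift (qG_linear E a c) c0 ` lifted_cube E"
  unfolding GG_def lifted_cube_def projective_lift_def edge_lift_iff[OF assms]
  by (auto simp: qG_linear_edge_lift_vec image_image)

lemma convex_hull_GG:
  assumes "simple_edges E" and "\<And>x. (\<forall>i. 0 \<le> x $ i \<and> x $ i \<le> 1) \<Longrightarrow> qG E a c c0 x > 0"
  shows "convex hull (GG E a c c0) = projective_lift (qG_linear E a c) c0 ` QP E"
  unfolding GG_eq_projective_lift_image[OF assms(1)] QP_eq_convex_hull_lifted_cube[OF assms(1)]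
  using qG_linear_pos_on_QP[OF assms] QP_eq_convex_hull_lifted_cube[OF assms(1)]
  by (intro convex_hull_projective_lift_image[OF linear_qG_linear]) simp

theorem proposition2:
  fixes E :: "'n::finite set set" and a :: "'n set \<Rightarrow> real" and c :: "'n \<Rightarrow> real" and c0 :: real
  assumes "simple_edges E"
    and "\<And>x. (\<forall>i. 0 \<le> x $ i \<and> x $ i \<le> 1) \<Longrightarrow> qG E a c c0 x > 0"
  shows "convex hull (GG E a c c0) =
           {(\<rho>, y, w). (y, w) \<in> scale_set \<rho> (QP E) \<and> \<rho> \<ge> 0 \<and>
              (\<Sum>e\<in>E. a e * w $ e) + (\<Sum>i\<in>UNIV. c i * y $ i) + c0 * \<rho> = 1}
         \<and> QP E = {(x, z). \<exists>\<sigma>\<ge>0. (1, x, z) \<in> scale_set \<sigma> (convex hull (GG E a c c0))}"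
proof -
  note hull_GG = convex_hull_GG[OF assms]
  note pos = qG_linear_pos_on_QP[OF assms]
  have nonempty: "QP E \<noteq> {}"
    using edge_lift_vec_in_QP[OF assms(1), of 0] by auto
  have bounded: "bounded (QP E)" and bounded_image: "bounded (projective_lift (qG_linear E a c) c0 ` QP E)"
    using compact_QP[OF assms(1)] compact_projective_lift_image[OF linear_qG_linear _ pos]
    by (simp_all add: compact_imp_bounded)
  have "{(\<rho>, q). q \<in> scale_set \<rho> (QP E) \<and> \<rho> \<ge> 0 \<and> qG_linear E a c q + c0 * \<rho> = 1} =
      {(\<rho>, y, w). (y, w) \<in> scale_set \<rho> (QP E) \<and> \<rho> \<ge> 0 \<and>
        (\<Sum>e\<in>E. a e * w $ e) + (\<Sum>i\<in>UNIV. c i * y $ i) + c0 * \<rho> = 1}"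
    by (auto simp: qG_linear_def)
  then have "convex hull (GG E a c c0) = {(\<rho>, y, w). (y, w) \<in> scale_set \<rho> (QP E) \<and> \<rho> \<ge> 0 \<and>
        (\<Sum>e\<in>E. a e * w $ e) + (\<Sum>i\<in>UNIV. c i * y $ i) + c0 * \<rho> = 1}"
    using hull_GG projective_lift_image_eq_slice[OF linear_qG_linear bounded nonempty pos] by simp
  moreover have "QP E = {(x, z). \<exists>\<sigma>\<ge>0. (1, x, z) \<in> scale_set \<sigma> (convex hull (GG E a c c0))}"
    using dehomogenize_projective_lift_image[OF bounded_image nonempty pos]
    by (rule trans) (auto simp: hull_GG)
  ultimately show ?thesis ..
qed

end
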